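(* Let $H\in\mathcal K_r(n)$ and let $X\subseteq[n]$. Let $\mathcal A$ be the set of all hyperedges $A$ of $H$ with $X\subseteq A$ and $|A|\le n/2$. If $\mathcal A$ is nonempty, then $\bigcap_{A\in\mathcal A} A$ belongs to $\mathcal A$.
   Context: $\mathcal K_r(n)$ is the class of hypergraphs on vertex set $V=[n]$ (identified with their hyperedge sets $\mathcal E$) satisfying: (R0) every $X\subseteq V$ with $|X|\le r$ is in $\mathcal E$; (R1) $A\in\mathcal E\Rightarrow V\setminus A\in\mathcal E$; (R2) $A,B\in\mathcal E$ and $|A\cap B|\ge r\Rightarrow A\cup B\in\mathcal E$. *)

theory Defs
  imports Main
begin

text \<open>The class K_r(n): hypergraphs on vertex set V = {1..n}, identified with their
  hyperedge sets E (a set of subsets of V), satisfying (R0), (R1), (R2).\<close>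

definition K_class :: "nat \<Rightarrow> nat \<Rightarrow> nat set set \<Rightarrow> bool" where
  "K_class r n E \<longleftrightarrow>
     (\<forall>A\<in>E. A \<subseteq> {1..n}) \<and>
     (\<forall>X. X \<subseteq> {1..n} \<and> card X \<le> r \<longrightarrow> X \<in> E) \<and>
     (\<forall>A\<in>E. {1..n} - A \<in> E) \<and>
     (\<forall>A\<in>E. \<forall>B\<in>E. card (A \<inter> B) \<ge> r \<longrightarrow> A \<union> B \<in> E)"

end

theory Submission
  imports Defs
begin

text \<open>By (R1) and (R2), \<open>A \<inter> B = V - ((V - A) \<union> (V - B))\<close> is a hyperedge as soon as the
  complements meet in at least \<open>r\<close> vertices, while by (R0) it is one whenever
  \<open>|A \<inter> B| \<le> r\<close>. For \<open>|A| + |B| \<le> n\<close> the complements meet in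
  \<open>n - |A| - |B| + |A \<inter> B| \<ge> |A \<inter> B|\<close> vertices, so one of the two cases always applies.
  Hence the small hyperedges containing \<open>X\<close> are closed under pairwise intersection, and
  being finitely many, under intersection of the whole family.\<close>

lemma finite_Inter_mem_if_Int_closed:
  assumes "finite S" "S \<noteq> {}" "S \<subseteq> F"
    and "\<And>A B. A \<in> F \<Longrightarrow> B \<in> F \<Longrightarrow> A \<inter> B \<in> F"
  shows "\<Inter> S \<in> F"
  using assms by (induction S rule: finite_ne_induct) simp_all

lemma K_class_subset: "K_class r n H \<Longrightarrow> A \<in> H \<Longrightarrow> A \<subseteq> {1..n}"
  unfolding K_class_def by blast

lemma K_class_finite: "K_class r n H \<Longrightarrow> A \<in> H \<Longrightarrow> finite A"
  using K_class_subset finite_atLeastAtMost finite_subset by meson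

lemma K_class_small: "K_class r n H \<Longrightarrow> X \<subseteq> {1..n} \<Longrightarrow> card X \<le> r \<Longrightarrow> X \<in> H"
  unfolding K_class_def by blast

lemma K_class_compl: "K_class r n H \<Longrightarrow> A \<in> H \<Longrightarrow> {1..n} - A \<in> H"
  unfolding K_class_def by blast

lemma K_class_Un: "K_class r n H \<Longrightarrow> A \<in> H \<Longrightarrow> B \<in> H \<Longrightarrow> r \<le> card (A \<inter> B) \<Longrightarrow> A \<union> B \<in> H"
  unfolding K_class_def by blast

lemma K_class_Int:
  assumes K: "K_class r n H" and "A \<in> H" "B \<in> H"
    and "r \<le> card (({1..n} - A) \<inter> ({1..n} - B))"
  shows "A \<inter> B \<in> H"
proof -
  have "({1..n} - A) \<union> ({1..n} - B) \<in> H"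
    using assms K_class_compl K_class_Un by blast
  then have "{1..n} - (({1..n} - A) \<union> ({1..n} - B)) \<in> H"
    using K K_class_compl by blast
  moreover have "{1..n} - (({1..n} - A) \<union> ({1..n} - B)) = A \<inter> B"
    using K_class_subset[OF K] \<open>A \<in> H\<close> \<open>B \<in> H\<close> by blast
  ultimately show ?thesis by simp
qed

lemma K_class_Int_of_card_sum_le:
  assumes K: "K_class r n H" and A: "A \<in> H" and B: "B \<in> H"
    and card_le: "card A + card B \<le> n"
  shows "A \<inter> B \<in> H"
proof (cases "card (A \<inter> B) \<le> r")
  case True
  moreover have "A \<inter> B \<subseteq> {1..n}" using K_class_subset[OF K A] by blast
  ultimately show ?thesis using K_class_small[OF K] by blast
next
  case False
  have fin: "finite A" "finite B" using K_class_finite[OF K] A B by blast+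
  have "A \<union> B \<subseteq> {1..n}" using K_class_subset[OF K] A B by blast
  have "card (({1..n} - A) \<inter> ({1..n} - B)) = card ({1..n} - (A \<union> B))"
    by (simp only: Diff_Un)
  also have "\<dots> = n - card (A \<union> B)"
    using card_Diff_subset[OF _ \<open>A \<union> B \<subseteq> {1..n}\<close>] fin by simp
  also have "\<dots> \<ge> card (A \<inter> B)"
    using card_Un_Int[OF fin] card_le by linarith
  finally have "r \<le> card (({1..n} - A) \<inter> ({1..n} - B))"
    using False by linarith
  then show ?thesis using K_class_Int[OF K A B] by blast
qed

theorem mainTheorem10:
  fixes r n :: nat and H :: "nat set set" and X :: "nat set"
  assumes "K_class r n H"
    and "X \<subseteq> {1..n}"
    and "{A \<in> H. X \<subseteq> A \<and> 2 * card A \<le> n} \<noteq> {}"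
  shows "\<Inter> {A \<in> H. X \<subseteq> A \<and> 2 * card A \<le> n} \<in> {A \<in> H. X \<subseteq> A \<and> 2 * card A \<le> n}"
proof (rule finite_Inter_mem_if_Int_closed)
  let ?\<A> = "{A \<in> H. X \<subseteq> A \<and> 2 * card A \<le> n}"
  have "?\<A> \<subseteq> Pow {1..n}" using K_class_subset[OF assms(1)] by blast
  then show "finite ?\<A>" by (rule finite_subset) simp
  show "?\<A> \<noteq> {}" "?\<A> \<subseteq> ?\<A>" using assms(3) by simp_all
  fix A B assume "A \<in> ?\<A>" "B \<in> ?\<A>"
  moreover from this have "card (A \<inter> B) \<le> card B"
    using K_class_finite[OF assms(1)] by (simp add: card_mono)
  ultimately show "A \<inter> B \<in> ?\<A>"
    using K_class_Int_of_card_sum_le[OF assms(1)] by auto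
qed

end
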